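(* Let $G=(V,E)$ be a nice graph with $V=\{1,\dots,n\}$, and let $K\in\mathbb{N}^E$. The following are equivalent: (1) $K$ is sufficient for $G$; (2) $\langle H_E^{K'},Q_E\rangle\neq 0$ for some $K'\in\mathbb{N}^E_{|E|}$ with $K'\le K$; (3) $\langle F,Q_E\rangle\neq0$ for some $F\in W^K_{E,|E|}$; (4) $\mathrm{per}(C_G(K'))\neq 0$ for some $K'\in\mathbb{N}^E_{|E|}$ with $K'\le K$.
   Context: All graphs are finite and simple; an edge is a $2$-subset $\{i,j\}$ of $V$; $E(i)$ is the set of edges incident to $i$; a graph is nice if it has no edge both of whose endpoints have degree $1$. For a finite set $E$, $\mathbb{N}^E$ is the set of maps $E\to\mathbb{N}$ and $\mathbb{N}^E_m=\{K\in\mathbb{N}^E:\sum_eK(e)=m\}$; $K\le K'$ means $K(e)\le K'(e)$ for all $e$; $K!=\prod_e K(e)!$; $x^K=\prod_e x_e^{K(e)}$. $P_G=\prod_{\{i,j\}\in E,\ i<j}(\sum_{e\in E(i)}x_e-\sum_{e\in E(j)}x_e)$ in variables $x_e$, $e\in E$; $\mathrm{mon}(P)$ is the set of monomials with nonzero coefficient in $P$. $K\in\mathbb{N}^E$ is sufficient for $G$ if there exists $K'\in\mathbb{N}^E_{|E|}$ with $K'\le K$ and $x^{K'}\in\mathrm{mon}(P_G)$. In the polynomial ring $\mathbb{C}[x_1,\dots,x_n]$ (one variable per vertex) define $Q_E=\prod_{\{i,j\}\in E,\ i<j}(x_i-x_j)$ and, for $K\in\mathbb{N}^E$, $H_E^K=\prod_{\{i,j\}\in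 E,\ i<j}(x_i+x_j)^{K(\{i,j\})}$. On homogeneous polynomials of degree $m$ in $x_1,\dots,x_n$ define the inner product $\langle f,g\rangle=\sum_{K\in\mathbb{N}^n_m}K!\,\mathrm{coe}(x^K,f)\overline{\mathrm{coe}(x^K,g)}$, where $\mathrm{coe}(x^K,f)$ is the coefficient of $x^K$ in $f$. $W^K_{E,m}$ is the complex linear span of $\{H_E^{K'}:K'\le K,\ K'\in\mathbb{N}^E_m\}$. $C_G=(c_{ee'})_{e,e'\in E}$ where for $e=\{i,j\}$, $i<j$: $c_{ee'}=1$ if $e'\ne e$ shares the vertex $i$ with $e$, $c_{ee'}=-1$ if $e'\neq e$ shares the vertex $j$ with $e$, and $c_{ee'}=0$ otherwise. For $K'\in\mathbb{N}^E_{|E|}$, $C_G(K')$ is the $|E|\times|E|$ matrix whose columns consist of $K'(e)$ copies of the column of $C_G$ indexed by $e$, for each $e\in E$. $\mathrm{per}$ denotes the permanent. *)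

theory Defs
  imports Complex_Main "HOL-Library.Poly_Mapping" "HOL-Library.FuncSet"
begin

type_synonym ('v, 'c) mpoly = "('v \<Rightarrow>\<^sub>0 nat) \<Rightarrow>\<^sub>0 'c"

definition Var :: "'v \<Rightarrow> ('v, 'c::{zero,one}) mpoly" where
  "Var v = Poly_Mapping.single (Poly_Mapping.single v 1) 1"

definition const_mp :: "'c::zero \<Rightarrow> ('v, 'c) mpoly" where
  "const_mp c = Poly_Mapping.single 0 c"

definition coe :: "('v \<Rightarrow>\<^sub>0 nat) \<Rightarrow> ('v, 'c::zero) mpoly \<Rightarrow> 'c" where
  "coe M f = Poly_Mapping.lookup f M"

definition graph_on :: "nat \<Rightarrow> nat set set \<Rightarrow> bool" where
  "graph_on n E \<longleftrightarrow> (\<forall>e\<in>E. e \<subseteq> {1..n} \<and> card e = 2)"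

definition inc_edges :: "nat set set \<Rightarrow> nat \<Rightarrow> nat set set" where
  "inc_edges E i = {e\<in>E. i \<in> e}"

definition deg :: "nat set set \<Rightarrow> nat \<Rightarrow> nat" where
  "deg E i = card (inc_edges E i)"

definition nice :: "nat set set \<Rightarrow> bool" where
  "nice E \<longleftrightarrow> (\<forall>e\<in>E. \<not> (\<forall>v\<in>e. deg E v = 1))"

definition lo :: "nat set \<Rightarrow> nat" where "lo e = Min e"
definition hi :: "nat set \<Rightarrow> nat" where "hi e = Max e"

definition NE :: "nat set set \<Rightarrow> (nat set \<Rightarrow>\<^sub>0 nat) set" where
  "NE E = {K. Poly_Mapping.keys K \<subseteq> E}"

definition NE_m :: "nat set set \<Rightarrow> nat \<Rightarrow> (nat set \<Rightarrow>\<^sub>0 nat) set" where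
  "NE_m E m = {K \<in> NE E. (\<Sum>e\<in>E. Poly_Mapping.lookup K e) = m}"

definition le_pw :: "('a \<Rightarrow>\<^sub>0 nat) \<Rightarrow> ('a \<Rightarrow>\<^sub>0 nat) \<Rightarrow> bool" where
  "le_pw K K' \<longleftrightarrow> (\<forall>e. Poly_Mapping.lookup K e \<le> Poly_Mapping.lookup K' e)"

definition P_G :: "nat set set \<Rightarrow> (nat set, int) mpoly" where
  "P_G E = (\<Prod>e\<in>E. (\<Sum>e'\<in>inc_edges E (lo e). Var e') - (\<Sum>e'\<in>inc_edges E (hi e). Var e'))"

definition mon :: "('v, 'c::zero) mpoly \<Rightarrow> ('v \<Rightarrow>\<^sub>0 nat) set" where
  "mon P = {M. coe M P \<noteq> 0}"

definition sufficient :: "nat set set \<Rightarrow> (nat set \<Rightarrow>\<^sub>0 nat) \<Rightarrow> bool" where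
  "sufficient E K \<longleftrightarrow> (\<exists>K'\<in>NE_m E (card E). le_pw K' K \<and> K' \<in> mon (P_G E))"

definition Q_E :: "nat set set \<Rightarrow> (nat, complex) mpoly" where
  "Q_E E = (\<Prod>e\<in>E. Var (lo e) - Var (hi e))"

definition H_E :: "nat set set \<Rightarrow> (nat set \<Rightarrow>\<^sub>0 nat) \<Rightarrow> (nat, complex) mpoly" where
  "H_E E K = (\<Prod>e\<in>E. (Var (lo e) + Var (hi e)) ^ Poly_Mapping.lookup K e)"

definition fact_pm :: "('v \<Rightarrow>\<^sub>0 nat) \<Rightarrow> nat" where
  "fact_pm M = (\<Prod>v\<in>Poly_Mapping.keys M. fact (Poly_Mapping.lookup M v))"

text \<open>The inner product on homogeneous polynomials of degree m (the sum over
  N^n_m restricted to monomials where both coefficients may be nonzero).\<close>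
definition inner_m :: "nat \<Rightarrow> (nat, complex) mpoly \<Rightarrow> (nat, complex) mpoly \<Rightarrow> complex" where
  "inner_m m f g = (\<Sum>M\<in>{M\<in>Poly_Mapping.keys f \<inter> Poly_Mapping.keys g. sum (Poly_Mapping.lookup M) (Poly_Mapping.keys M) = m}.
       of_nat (fact_pm M) * coe M f * cnj (coe M g))"

text \<open>W^K_{E,m}: complex linear span of H_E^{K'}, K' \<le> K, K' \<in> N^E_m (as finite linear
  combinations over this finite generating family).\<close>
definition W_E :: "nat set set \<Rightarrow> (nat set \<Rightarrow>\<^sub>0 nat) \<Rightarrow> nat \<Rightarrow> (nat, complex) mpoly set" where
  "W_E E K m = {(\<Sum>K'\<in>{K'\<in>NE_m E m. le_pw K' K}. const_mp (c K') * H_E E K') | c. True}"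

definition C_G :: "nat set set \<Rightarrow> nat set \<Rightarrow> nat set \<Rightarrow> int" where
  "C_G E e e' = (if e' \<noteq> e \<and> lo e \<in> e' then 1
                 else if e' \<noteq> e \<and> hi e \<in> e' then -1 else 0)"

definition permanent :: "'r set \<Rightarrow> 'k set \<Rightarrow> ('r \<Rightarrow> 'k \<Rightarrow> 'a::comm_ring_1) \<Rightarrow> 'a" where
  "permanent R C A = (\<Sum>\<sigma>\<in>{\<sigma>\<in>R \<rightarrow>\<^sub>E C. bij_betw \<sigma> R C}. \<Prod>r\<in>R. A r (\<sigma> r))"

text \<open>C_G(K'): rows indexed by E, columns indexed by pairs (e,k) with k < K'(e),
  i.e. K'(e) copies of column e of C_G.\<close>
definition col_slots :: "nat set set \<Rightarrow> (nat set \<Rightarrow>\<^sub>0 nat) \<Rightarrow> (nat set \<times> nat) set" where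
  "col_slots E K = {(e, k). e \<in> E \<and> k < Poly_Mapping.lookup K e}"

definition C_G_K :: "nat set set \<Rightarrow> nat set \<Rightarrow> nat set \<times> nat \<Rightarrow> int" where
  "C_G_K E r c = C_G E r (fst c)"

definition per_C_G :: "nat set set \<Rightarrow> (nat set \<Rightarrow>\<^sub>0 nat) \<Rightarrow> int" where
  "per_C_G E K = permanent E (col_slots E K) (C_G_K E)"

end

theory Submission
  imports Defs
begin

(* The apolar pairing (f, g) = \<Sum>_M M! f_M g_M of two products of |E| linear forms
   \<Prod>_s (\<Sum>_v a s v x_v) and \<Prod>_e (\<Sum>_v b e v x_v) is the permanent of the matrix
   (\<Sum>_v a s v b e v)_(e,s): after expanding both products, a common monomial of multidegree M
   is matched M! times, once for each bijection between the factors preserving the chosen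
   variables. The monomial x^K' is a product of coordinate forms and P_G is the product of the
   rows of C_G, so K'! coe(x^K', P_G) = per C_G(K'). Likewise H_E^K' is a product of forms
   x_i + x_j and Q_E, whose coefficients are real, is a product of forms x_i - x_j, and pairing them
   gives <H_E^K', Q_E> = per C_G(K') again. Condition (3) reduces to (2) because the inner product
   is linear in its first argument. *)

definition image_count :: "'a set \<Rightarrow> ('a \<Rightarrow> 'v) \<Rightarrow> ('v \<Rightarrow>\<^sub>0 nat)" where
  "image_count A f = (\<Sum>a\<in>A. Poly_Mapping.single (f a) 1)"

definition linear_form :: "'v set \<Rightarrow> ('v \<Rightarrow> 'c::comm_monoid_add) \<Rightarrow> ('v, 'c) mpoly" where
  "linear_form V a = (\<Sum>v\<in>V. Poly_Mapping.single (Poly_Mapping.single v 1) (a v))"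

lemma lookup_image_count:
  "finite A \<Longrightarrow> Poly_Mapping.lookup (image_count A f) v = card {a\<in>A. f a = v}"
  unfolding image_count_def
  by (simp add: lookup_sum lookup_single when_def sum.If_cases Int_def conj_commute)

lemma lookup_sum_single:
  "finite F \<Longrightarrow>
   Poly_Mapping.lookup (\<Sum>f\<in>F. Poly_Mapping.single (k f) (w f)) M = (\<Sum>f\<in>{f\<in>F. k f = M}. w f)"
  by (simp add: lookup_sum lookup_single when_def sum.inter_filter)

lemma keys_sum_single:
  assumes "finite F"
  shows "Poly_Mapping.keys (\<Sum>f\<in>F. Poly_Mapping.single (k f) (w f)) \<subseteq> k ` F"
proof
  fix M assume "M \<in> Poly_Mapping.keys (\<Sum>f\<in>F. Poly_Mapping.single (k f) (w f))"
  then have "(\<Sum>f\<in>{f\<in>F. k f = M}. w f) \<noteq> 0"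
    using assms by (simp add: in_keys_iff lookup_sum_single)
  then obtain f where "f \<in> F" "k f = M" by (metis (mono_tags, lifting) empty_Collect_eq sum.empty)
  then show "M \<in> k ` F" by blast
qed

lemma keys_image_count: "finite A \<Longrightarrow> Poly_Mapping.keys (image_count A f) \<subseteq> f ` A"
  unfolding image_count_def by (rule keys_sum_single)

lemma degree_image_count:
  assumes "finite A"
  shows "sum (Poly_Mapping.lookup (image_count A f)) (Poly_Mapping.keys (image_count A f)) = card A"
proof -
  have "sum (Poly_Mapping.lookup (image_count A f)) (Poly_Mapping.keys (image_count A f))
      = sum (Poly_Mapping.lookup (image_count A f)) (f ` A)"
    using assms keys_image_count[OF assms, of f]
    by (intro sum.mono_neutral_left) (auto simp: not_in_keys_iff_lookup_eq_zero)
  also have "\<dots> = (\<Sum>v\<in>f ` A. card {a\<in>A. f a = v})"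
    using assms by (simp add: lookup_image_count)
  also have "\<dots> = (\<Sum>a\<in>A. 1)"
    using assms by (subst sum.image_gen[of A "\<lambda>_. 1" f]) auto
  finally show ?thesis by simp
qed

lemma prod_single:
  fixes c :: "'a \<Rightarrow> 'c::comm_semiring_1" and k :: "'a \<Rightarrow> 'k::comm_monoid_add"
  shows "finite A \<Longrightarrow>
    (\<Prod>a\<in>A. Poly_Mapping.single (k a) (c a)) = Poly_Mapping.single (\<Sum>a\<in>A. k a) (\<Prod>a\<in>A. c a)"
  by (induction A rule: finite_induct) (auto simp: mult_single)

lemma prod_linear_form_expand:
  fixes a :: "'s \<Rightarrow> 'v \<Rightarrow> 'c::comm_semiring_1"
  assumes "finite S" "finite V"
  shows "(\<Prod>s\<in>S. linear_form V (a s))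
       = (\<Sum>g\<in>S \<rightarrow>\<^sub>E V. Poly_Mapping.single (image_count S g) (\<Prod>s\<in>S. a s (g s)))"
  using assms by (simp add: linear_form_def prod_sum_PiE prod_single image_count_def)

lemma linear_form_delta:
  assumes "finite V" "x \<in> V"
  shows "linear_form V (\<lambda>v. if v = x then 1 else 0) = Poly_Mapping.single (Poly_Mapping.single x 1) (1::'c::semiring_1)"
proof -
  have "linear_form V (\<lambda>v. if v = x then 1 else 0)
      = (\<Sum>v\<in>V. if v = x then Poly_Mapping.single (Poly_Mapping.single v 1) 1 else 0)"
    unfolding linear_form_def by (rule sum.cong) auto
  then show ?thesis using assms by (simp add: sum.delta')
qed

lemma sum_delta_mult:
  fixes f :: "'a \<Rightarrow> 'c::semiring_1"
  assumes "finite A" "x \<in> A"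
  shows "(\<Sum>v\<in>A. (if v = x then 1 else 0) * f v) = f x"
proof -
  have "(\<Sum>v\<in>A. (if v = x then 1 else 0) * f v) = (\<Sum>v\<in>A. if v = x then f v else 0)"
    by (rule sum.cong) auto
  then show ?thesis using assms by (simp add: sum.delta')
qed

lemma monomial_eq_prod_linear_forms:
  assumes "finite S" "finite V" "\<And>s. s \<in> S \<Longrightarrow> f s \<in> V"
  shows "(\<Prod>s\<in>S. linear_form V (\<lambda>v. if v = f s then 1 else 0))
       = Poly_Mapping.single (image_count S f) (1::'c::comm_semiring_1)"
  using assms by (simp add: linear_form_delta prod_single image_count_def)

lemma bij_betw_bijections_insert:
  assumes "a \<notin> A"
  shows "bij_betw (\<lambda>\<tau>. (\<tau> a, \<tau>(a := undefined)))
           {\<tau>\<in>insert a A \<rightarrow>\<^sub>E B. bij_betw \<tau> (insert a A) B}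
           (SIGMA b:B. {\<tau>\<in>A \<rightarrow>\<^sub>E B - {b}. bij_betw \<tau> A (B - {b})})"
proof (rule bij_betw_byWitness[where f'="\<lambda>(b, \<tau>). \<tau>(a := b)"])
  show "(\<lambda>\<tau>. (\<tau> a, \<tau>(a := undefined))) ` {\<tau>\<in>insert a A \<rightarrow>\<^sub>E B. bij_betw \<tau> (insert a A) B}
      \<subseteq> (SIGMA b:B. {\<tau>\<in>A \<rightarrow>\<^sub>E B - {b}. bij_betw \<tau> A (B - {b})})"
  proof (rule image_subsetI)
    fix \<tau> assume "\<tau> \<in> {\<tau>\<in>insert a A \<rightarrow>\<^sub>E B. bij_betw \<tau> (insert a A) B}"
    then have \<tau>: "\<tau> \<in> insert a A \<rightarrow>\<^sub>E B" "bij_betw \<tau> (insert a A) B" by auto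
    have "bij_betw \<tau> A (B - {\<tau> a})"
      using \<tau>(2) assms unfolding bij_betw_def by (auto simp: inj_on_def)
    moreover have "bij_betw (\<tau>(a := undefined)) A (B - {\<tau> a}) = bij_betw \<tau> A (B - {\<tau> a})"
      by (rule bij_betw_cong) (use assms in auto)
    ultimately show "(\<tau> a, \<tau>(a := undefined)) \<in> (SIGMA b:B. {\<tau>\<in>A \<rightarrow>\<^sub>E B - {b}. bij_betw \<tau> A (B - {b})})"
      using \<tau> assms by (auto simp: PiE_def extensional_def bij_betw_def inj_on_def)
  qed
  show "(\<lambda>(b, \<tau>). \<tau>(a := b)) ` (SIGMA b:B. {\<tau>\<in>A \<rightarrow>\<^sub>E B - {b}. bij_betw \<tau> A (B - {b})})
      \<subseteq> {\<tau>\<in>insert a A \<rightarrow>\<^sub>E B. bij_betw \<tau> (insert a A) B}"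
  proof (rule image_subsetI)
    fix p assume "p \<in> (SIGMA b:B. {\<tau>\<in>A \<rightarrow>\<^sub>E B - {b}. bij_betw \<tau> A (B - {b})})"
    then obtain b \<tau> where p: "p = (b, \<tau>)" and b: "b \<in> B"
      and \<tau>: "\<tau> \<in> A \<rightarrow>\<^sub>E B - {b}" "bij_betw \<tau> A (B - {b})" by auto
    have "bij_betw (\<tau>(a := b)) A (B - {b}) = bij_betw \<tau> A (B - {b})"
      by (rule bij_betw_cong) (use assms in auto)
    with \<tau>(2) have "bij_betw (\<tau>(a := b)) A (B - {b})" by simp
    then have "bij_betw (\<tau>(a := b)) (A \<union> {a}) ((B - {b}) \<union> {b})"
      by (rule bij_betw_combine) auto
    then show "(\<lambda>(b, \<tau>). \<tau>(a := b)) p \<in> {\<tau>\<in>insert a A \<rightarrow>\<^sub>E B. bij_betw \<tau> (insert a A) B}"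
      using \<tau>(1) b by (auto simp: p insert_absorb PiE_def extensional_def)
  qed
qed (use assms in \<open>auto simp: PiE_def extensional_def\<close>)

lemma card_bijections:
  assumes "finite A" "finite B"
  shows "card {\<tau>\<in>A \<rightarrow>\<^sub>E B. bij_betw \<tau> A B} = (if card A = card B then fact (card A) else 0)"
  using assms
proof (induction A arbitrary: B rule: finite_induct)
  case empty
  then show ?case by (cases "B = {}") (simp_all add: bij_betw_def)
next
  case (insert a A)
  have fin: "finite {\<tau>\<in>A \<rightarrow>\<^sub>E B - {b}. bij_betw \<tau> A (B - {b})}" for b
    using insert by (intro finite_subset[OF _ finite_PiE[of A "\<lambda>_. B - {b}"]]) auto
  have "card {\<tau>\<in>insert a A \<rightarrow>\<^sub>E B. bij_betw \<tau> (insert a A) B}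
      = card (SIGMA b:B. {\<tau>\<in>A \<rightarrow>\<^sub>E B - {b}. bij_betw \<tau> A (B - {b})})"
    using bij_betw_same_card[OF bij_betw_bijections_insert[OF insert.hyps(2)]] .
  also have "\<dots> = (\<Sum>b\<in>B. if card A = card B - 1 then fact (card A) else 0)"
    using insert fin by (simp add: card_SigmaI card_Diff_singleton)
  also have "\<dots> = (if card (insert a A) = card B then fact (card (insert a A)) else 0)"
    using insert by (cases "B = {}") (auto simp: card_gt_0_iff fact_reduce[of "card B"])
  finally show ?case .
qed

lemma bij_betw_fibre:
  assumes "bij_betw \<sigma> E S" "\<forall>e\<in>E. g (\<sigma> e) = h e"
  shows "bij_betw \<sigma> {e\<in>E. h e = v} {s\<in>S. g s = v}"
  using assms unfolding bij_betw_def
  by (auto simp: inj_on_def)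

lemma bij_betw_glue_fibres:
  assumes "\<And>v. v \<in> h ` E \<Longrightarrow> bij_betw (\<tau> v) {e\<in>E. h e = v} {s\<in>S. g s = v}"
    and "g ` S \<subseteq> h ` E"
  shows "bij_betw (\<lambda>e. \<tau> (h e) e) E S" and "\<forall>e\<in>E. g (\<tau> (h e) e) = h e"
proof -
  have into: "\<tau> (h e) e \<in> {s\<in>S. g s = h e}" if "e \<in> E" for e
    using assms(1)[of "h e"] that by (auto simp: bij_betw_def)
  then show "\<forall>e\<in>E. g (\<tau> (h e) e) = h e" by blast
  have "inj_on (\<lambda>e. \<tau> (h e) e) E"
  proof (rule inj_onI)
    fix e1 e2 assume e: "e1 \<in> E" "e2 \<in> E" "\<tau> (h e1) e1 = \<tau> (h e2) e2"
    then have "h e1 = h e2" using into by (metis (mono_tags, lifting) mem_Collect_eq)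
    then show "e1 = e2"
      using e assms(1)[of "h e1"] by (auto simp: bij_betw_def inj_on_def)
  qed
  moreover have "S \<subseteq> (\<lambda>e. \<tau> (h e) e) ` E"
  proof
    fix s assume s: "s \<in> S"
    then have "g s \<in> h ` E" using assms(2) by blast
    then have "s \<in> \<tau> (g s) ` {e\<in>E. h e = g s}"
      using s assms(1)[of "g s"] by (auto simp: bij_betw_def)
    then show "s \<in> (\<lambda>e. \<tau> (h e) e) ` E" by force
  qed
  ultimately show "bij_betw (\<lambda>e. \<tau> (h e) e) E S"
    using into by (auto simp: bij_betw_def)
qed

lemma image_count_eq_if_bij_betw:
  assumes "finite E" "finite S" "bij_betw \<sigma> E S" "\<forall>e\<in>E. g (\<sigma> e) = h e"
  shows "image_count S g = image_count E h"
proof (rule poly_mapping_eqI)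
  fix v
  show "Poly_Mapping.lookup (image_count S g) v = Poly_Mapping.lookup (image_count E h) v"
    using assms bij_betw_same_card[OF bij_betw_fibre[OF assms(3,4), of v]]
    by (simp add: lookup_image_count)
qed

lemma bij_betw_label_preserving_bijections_fibres:
  assumes "g ` S \<subseteq> h ` E"
  shows "bij_betw (\<lambda>\<sigma>. \<lambda>v\<in>h ` E. restrict \<sigma> {e\<in>E. h e = v})
           {\<sigma>\<in>E \<rightarrow>\<^sub>E S. bij_betw \<sigma> E S \<and> (\<forall>e\<in>E. g (\<sigma> e) = h e)}
           (\<Pi>\<^sub>E v\<in>h ` E. {\<tau>\<in>{e\<in>E. h e = v} \<rightarrow>\<^sub>E {s\<in>S. g s = v}.
                              bij_betw \<tau> {e\<in>E. h e = v} {s\<in>S. g s = v}})"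
    (is "bij_betw ?split ?X ?Y")
proof (rule bij_betw_byWitness[where f'="\<lambda>\<tau>. \<lambda>e\<in>E. \<tau> (h e) e"])
  show "\<forall>\<sigma>\<in>?X. (\<lambda>e\<in>E. ?split \<sigma> (h e) e) = \<sigma>"
    by (auto simp: PiE_def extensional_def fun_eq_iff)
  show "\<forall>\<tau>\<in>?Y. ?split (\<lambda>e\<in>E. \<tau> (h e) e) = \<tau>"
  proof
    fix \<tau> assume \<tau>: "\<tau> \<in> ?Y"
    show "?split (\<lambda>e\<in>E. \<tau> (h e) e) = \<tau>"
    proof
      fix v
      show "?split (\<lambda>e\<in>E. \<tau> (h e) e) v = \<tau> v"
      proof (cases "v \<in> h ` E")
        case True
        then have "\<tau> v \<in> extensional {e\<in>E. h e = v}"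
          using PiE_mem[OF \<tau> True] by (auto simp: PiE_def)
        then show ?thesis using True by (auto simp: extensional_def fun_eq_iff)
      qed (use \<tau> in auto)
    qed
  qed
  show "?split ` ?X \<subseteq> ?Y"
  proof (rule image_subsetI)
    fix \<sigma> assume "\<sigma> \<in> ?X"
    then have \<sigma>: "\<sigma> \<in> E \<rightarrow>\<^sub>E S" "bij_betw \<sigma> E S" "\<forall>e\<in>E. g (\<sigma> e) = h e" by auto
    have "restrict \<sigma> {e\<in>E. h e = v} \<in> {e\<in>E. h e = v} \<rightarrow>\<^sub>E {s\<in>S. g s = v}" for v
      using \<sigma>(1,3) by auto
    moreover have "bij_betw (restrict \<sigma> {e\<in>E. h e = v}) {e\<in>E. h e = v} {s\<in>S. g s = v}" for v
      using bij_betw_fibre[OF \<sigma>(2,3)] by simp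
    ultimately show "?split \<sigma> \<in> ?Y" by simp
  qed
  show "(\<lambda>\<tau>. \<lambda>e\<in>E. \<tau> (h e) e) ` ?Y \<subseteq> ?X"
  proof (rule image_subsetI)
    fix \<tau> assume "\<tau> \<in> ?Y"
    then have "bij_betw (\<tau> v) {e\<in>E. h e = v} {s\<in>S. g s = v}" if "v \<in> h ` E" for v
      using that by auto
    from bij_betw_glue_fibres[OF this assms] show "(\<lambda>e\<in>E. \<tau> (h e) e) \<in> ?X"
      by (auto simp: bij_betw_def inj_on_def image_def)
  qed
qed

lemma card_label_preserving_bijections:
  assumes fE: "finite E" and fS: "finite S"
  shows "card {\<sigma>\<in>E \<rightarrow>\<^sub>E S. bij_betw \<sigma> E S \<and> (\<forall>e\<in>E. g (\<sigma> e) = h e)}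
       = (if image_count S g = image_count E h then fact_pm (image_count E h) else 0)"
proof (cases "image_count S g = image_count E h")
  case False
  then have no_bij: "{\<sigma>\<in>E \<rightarrow>\<^sub>E S. bij_betw \<sigma> E S \<and> (\<forall>e\<in>E. g (\<sigma> e) = h e)} = {}"
    using image_count_eq_if_bij_betw[OF fE fS] by blast
  show ?thesis unfolding no_bij using False by simp
next
  case True
  have card_fibres: "card {e\<in>E. h e = v} = card {s\<in>S. g s = v}" for v
    using arg_cong[OF True, of "\<lambda>M. Poly_Mapping.lookup M v"] fE fS by (simp add: lookup_image_count)
  have "g ` S \<subseteq> h ` E"
  proof
    fix v assume "v \<in> g ` S"
    then have "card {s\<in>S. g s = v} \<noteq> 0" using fS by auto
    then have "{e\<in>E. h e = v} \<noteq> {}" using card_fibres[of v] by (metis card.empty)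
    then show "v \<in> h ` E" by auto
  qed
  from bij_betw_same_card[OF bij_betw_label_preserving_bijections_fibres[OF this]]
  have "card {\<sigma>\<in>E \<rightarrow>\<^sub>E S. bij_betw \<sigma> E S \<and> (\<forall>e\<in>E. g (\<sigma> e) = h e)}
      = (\<Prod>v\<in>h ` E. card {\<tau>\<in>{e\<in>E. h e = v} \<rightarrow>\<^sub>E {s\<in>S. g s = v}.
                               bij_betw \<tau> {e\<in>E. h e = v} {s\<in>S. g s = v}})"
    using fE by (simp add: card_PiE)
  also have "\<dots> = (\<Prod>v\<in>h ` E. fact (Poly_Mapping.lookup (image_count E h) v))"
    using fE fS card_fibres by (intro prod.cong refl) (simp add: card_bijections lookup_image_count)
  also have "\<dots> = fact_pm (image_count E h)"
    unfolding fact_pm_def using fE keys_image_count[OF fE, of h]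
    by (intro prod.mono_neutral_right) (auto simp: in_keys_iff)
  finally show ?thesis using True by simp
qed

lemma of_nat_card_label_preserving_bijections:
  assumes "finite E" "finite S"
  shows "(of_nat (if image_count S g = image_count E h then fact_pm (image_count E h) else 0) :: 'c::semiring_1)
       = (\<Sum>\<sigma>\<in>{\<sigma>\<in>E \<rightarrow>\<^sub>E S. bij_betw \<sigma> E S}. if \<forall>e\<in>E. g (\<sigma> e) = h e then 1 else 0)"
proof -
  have "finite {\<sigma>\<in>E \<rightarrow>\<^sub>E S. bij_betw \<sigma> E S}"
    using assms by (auto intro: finite_subset[OF _ finite_PiE[of E "\<lambda>_. S"]])
  then show ?thesis
    using card_label_preserving_bijections[OF assms, of g h]
    by (simp add: sum.inter_filter[symmetric] conj_assoc)
qed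

definition apolar :: "('v, 'c::comm_semiring_1) mpoly \<Rightarrow> ('v, 'c) mpoly \<Rightarrow> 'c" where
  "apolar f g = (\<Sum>M\<in>Poly_Mapping.keys f \<inter> Poly_Mapping.keys g.
      of_nat (fact_pm M) * Poly_Mapping.lookup f M * Poly_Mapping.lookup g M)"

lemma apolar_eq_sum_superset:
  assumes "finite T" "Poly_Mapping.keys f \<subseteq> T"
  shows "apolar f g
       = (\<Sum>M\<in>T. of_nat (fact_pm M) * Poly_Mapping.lookup f M * Poly_Mapping.lookup g M)"
  unfolding apolar_def using assms by (intro sum.mono_neutral_left) (auto simp: in_keys_iff)

lemma apolar_single_one:
  "apolar (Poly_Mapping.single M 1) g = of_nat (fact_pm M) * Poly_Mapping.lookup g M"
  by (subst apolar_eq_sum_superset[of "{M}"]) auto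

lemma fact_pm_pos: "fact_pm M > 0"
  unfolding fact_pm_def by (simp add: prod_pos)

lemma apolar_expanded:
  fixes A :: "('s \<Rightarrow> 'v) \<Rightarrow> 'c::comm_semiring_1"
  assumes "finite G" "finite H"
  shows "apolar (\<Sum>g\<in>G. Poly_Mapping.single (image_count S g) (A g))
                (\<Sum>h\<in>H. Poly_Mapping.single (image_count E h) (B h))
       = (\<Sum>g\<in>G. \<Sum>h\<in>H. of_nat (if image_count S g = image_count E h
                                   then fact_pm (image_count E h) else 0) * A g * B h)"
  (is "apolar ?P ?Q = _")
proof -
  have "apolar ?P ?Q = (\<Sum>M\<in>image_count S ` G.
      of_nat (fact_pm M) * Poly_Mapping.lookup ?P M * Poly_Mapping.lookup ?Q M)"
    using assms by (intro apolar_eq_sum_superset keys_sum_single) auto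
  also have "\<dots> = (\<Sum>M\<in>image_count S ` G. \<Sum>g\<in>{g\<in>G. image_count S g = M}.
      of_nat (fact_pm (image_count S g)) * A g * Poly_Mapping.lookup ?Q (image_count S g))"
    using assms
    by (intro sum.cong refl) (simp add: lookup_sum_single sum_distrib_left sum_distrib_right, rule sum.swap)
  also have "\<dots> = (\<Sum>g\<in>G. of_nat (fact_pm (image_count S g)) * A g * Poly_Mapping.lookup ?Q (image_count S g))"
    using assms(1) by (rule sum.image_gen[symmetric])
  also have "\<dots> = (\<Sum>g\<in>G. \<Sum>h\<in>H. of_nat (if image_count S g = image_count E h
                                   then fact_pm (image_count E h) else 0) * A g * B h)"
  proof (intro sum.cong refl)
    fix g
    have "Poly_Mapping.lookup ?Q (image_count S g)
        = (\<Sum>h\<in>H. if image_count E h = image_count S g then B h else 0)"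
      using assms by (simp add: lookup_sum_single sum.inter_filter)
    then show "of_nat (fact_pm (image_count S g)) * A g * Poly_Mapping.lookup ?Q (image_count S g)
        = (\<Sum>h\<in>H. of_nat (if image_count S g = image_count E h
                          then fact_pm (image_count E h) else 0) * A g * B h)"
      by (simp add: sum_distrib_left) (rule sum.cong; simp)
  qed
  finally show ?thesis .
qed

lemma bij_betw_precompose_PiE:
  assumes "bij_betw \<sigma> E S"
  shows "bij_betw (\<lambda>g. compose E g \<sigma>) (S \<rightarrow>\<^sub>E V) (E \<rightarrow>\<^sub>E V)"
proof (rule bij_betw_byWitness[where f'="\<lambda>k. compose S k (inv_into E \<sigma>)"])
  show "\<forall>g\<in>S \<rightarrow>\<^sub>E V. compose S (compose E g \<sigma>) (inv_into E \<sigma>) = g"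
    using assms
    by (auto simp: compose_def bij_betw_def inv_into_into f_inv_into_f PiE_def extensional_def fun_eq_iff)
  show "\<forall>k\<in>E \<rightarrow>\<^sub>E V. compose E (compose S k (inv_into E \<sigma>)) \<sigma> = k"
    using assms
    by (auto simp: compose_def bij_betw_def inv_into_f_f PiE_def extensional_def fun_eq_iff)
qed (use assms in \<open>auto simp: compose_def bij_betw_def inv_into_into\<close>)

lemma sum_PiE_precompose:
  fixes a :: "'s \<Rightarrow> 'v \<Rightarrow> 'c::comm_semiring_1"
  assumes "finite E" "finite V" "bij_betw \<sigma> E S"
  shows "(\<Sum>g\<in>S \<rightarrow>\<^sub>E V. (\<Prod>s\<in>S. a s (g s)) * (\<Prod>e\<in>E. b e (compose E g \<sigma> e)))
       = (\<Prod>e\<in>E. \<Sum>v\<in>V. a (\<sigma> e) v * b e v)"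
proof -
  have "(\<Sum>g\<in>S \<rightarrow>\<^sub>E V. (\<Prod>s\<in>S. a s (g s)) * (\<Prod>e\<in>E. b e (compose E g \<sigma> e)))
      = (\<Sum>g\<in>S \<rightarrow>\<^sub>E V. \<Prod>e\<in>E. a (\<sigma> e) (compose E g \<sigma> e) * b e (compose E g \<sigma> e))"
    by (intro sum.cong refl)
       (simp add: compose_def prod.distrib prod.reindex_bij_betw[OF assms(3), symmetric])
  also have "\<dots> = (\<Sum>k\<in>E \<rightarrow>\<^sub>E V. \<Prod>e\<in>E. a (\<sigma> e) (k e) * b e (k e))"
    by (rule sum.reindex_bij_betw[OF bij_betw_precompose_PiE[OF assms(3)]])
  also have "\<dots> = (\<Prod>e\<in>E. \<Sum>v\<in>V. a (\<sigma> e) v * b e v)"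
    using assms by (simp add: prod_sum_PiE)
  finally show ?thesis .
qed

lemma apolar_prod_linear_forms:
  fixes a :: "'s \<Rightarrow> 'v \<Rightarrow> 'c::comm_semiring_1" and b :: "'e \<Rightarrow> 'v \<Rightarrow> 'c"
  assumes fS: "finite S" and fE: "finite E" and fV: "finite V"
  shows "apolar (\<Prod>s\<in>S. linear_form V (a s)) (\<Prod>e\<in>E. linear_form V (b e))
       = (\<Sum>\<sigma>\<in>{\<sigma>\<in>E \<rightarrow>\<^sub>E S. bij_betw \<sigma> E S}. \<Prod>e\<in>E. \<Sum>v\<in>V. a (\<sigma> e) v * b e v)"
proof -
  define Bij where "Bij = {\<sigma>\<in>E \<rightarrow>\<^sub>E S. bij_betw \<sigma> E S}"
  define A where "A g = (\<Prod>s\<in>S. a s (g s))" for g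
  define B where "B h = (\<Prod>e\<in>E. b e (h e))" for h
  have fin: "finite (S \<rightarrow>\<^sub>E V)" "finite (E \<rightarrow>\<^sub>E V)"
    using fS fE fV by (auto intro: finite_PiE)
  note matchings = of_nat_card_label_preserving_bijections[OF fE fS, folded Bij_def]
  have collapse: "(\<Sum>h\<in>E \<rightarrow>\<^sub>E V. if \<forall>e\<in>E. g (\<sigma> e) = h e then A g * B h else 0)
      = A g * B (compose E g \<sigma>)" if "\<sigma> \<in> Bij" "g \<in> S \<rightarrow>\<^sub>E V" for \<sigma> g
  proof -
    have "compose E g \<sigma> \<in> E \<rightarrow>\<^sub>E V"
      using that by (auto simp: Bij_def compose_def)
    moreover have "(\<forall>e\<in>E. g (\<sigma> e) = h e) \<longleftrightarrow> h = compose E g \<sigma>" if "h \<in> E \<rightarrow>\<^sub>E V" for h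
      using that by (auto simp: compose_def PiE_def extensional_def fun_eq_iff)
    ultimately show ?thesis
      using fin(2) by (simp add: sum.delta' cong: sum.cong)
  qed
  have "apolar (\<Prod>s\<in>S. linear_form V (a s)) (\<Prod>e\<in>E. linear_form V (b e))
      = (\<Sum>g\<in>S \<rightarrow>\<^sub>E V. \<Sum>h\<in>E \<rightarrow>\<^sub>E V. of_nat (if image_count S g = image_count E h
                                   then fact_pm (image_count E h) else 0) * A g * B h)"
    unfolding prod_linear_form_expand[OF fS fV] prod_linear_form_expand[OF fE fV] A_def B_def
    by (rule apolar_expanded[OF fin(1,2)])
  also have "\<dots> = (\<Sum>g\<in>S \<rightarrow>\<^sub>E V. \<Sum>h\<in>E \<rightarrow>\<^sub>E V. \<Sum>\<sigma>\<in>Bij.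
                      if \<forall>e\<in>E. g (\<sigma> e) = h e then A g * B h else 0)"
    unfolding matchings by (intro sum.cong refl) (auto simp: sum_distrib_right intro!: sum.cong)
  also have "\<dots> = (\<Sum>\<sigma>\<in>Bij. \<Sum>g\<in>S \<rightarrow>\<^sub>E V. \<Sum>h\<in>E \<rightarrow>\<^sub>E V.
                      if \<forall>e\<in>E. g (\<sigma> e) = h e then A g * B h else 0)"
    by (simp add: sum.swap[of _ "E \<rightarrow>\<^sub>E V" Bij] sum.swap[of _ "S \<rightarrow>\<^sub>E V" Bij])
  also have "\<dots> = (\<Sum>\<sigma>\<in>Bij. \<Sum>g\<in>S \<rightarrow>\<^sub>E V. A g * B (compose E g \<sigma>))"
    by (intro sum.cong refl collapse)
  also have "\<dots> = (\<Sum>\<sigma>\<in>Bij. \<Prod>e\<in>E. \<Sum>v\<in>V. a (\<sigma> e) v * b e v)"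
    unfolding A_def B_def using fE fV by (intro sum.cong refl sum_PiE_precompose) (auto simp: Bij_def)
  finally show ?thesis unfolding Bij_def .
qed

lemma graph_on_finite: "graph_on n E \<Longrightarrow> finite E"
  unfolding graph_on_def by (rule finite_subset[of _ "Pow {1..n}"]) auto

lemma graph_on_edge:
  assumes "graph_on n E" "e \<in> E"
  shows "e = {lo e, hi e}" "lo e \<noteq> hi e" "lo e \<in> e" "hi e \<in> e" "lo e \<in> {1..n}" "hi e \<in> {1..n}"
proof -
  have "card e = 2" and sub: "e \<subseteq> {1..n}" using assms by (auto simp: graph_on_def)
  then obtain x y where "x \<noteq> y" "e = {x, y}" by (auto simp: card_2_iff)
  then show "e = {lo e, hi e}" "lo e \<noteq> hi e" "lo e \<in> e" "hi e \<in> e"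
    by (auto simp: lo_def hi_def min_def max_def)
  then show "lo e \<in> {1..n}" "hi e \<in> {1..n}" using sub by auto
qed

lemma C_G_eq:
  assumes "graph_on n E" "e \<in> E" "e' \<in> E"
  shows "C_G E e e' = (if lo e \<in> e' then 1 else 0) - (if hi e \<in> e' then 1 else 0)"
proof (cases "e' = e")
  case True
  then show ?thesis using graph_on_edge[OF assms(1,2)] by (simp add: C_G_def)
next
  case False
  have "\<not> (lo e \<in> e' \<and> hi e \<in> e')"
  proof
    assume "lo e \<in> e' \<and> hi e \<in> e'"
    then have "e \<subseteq> e'" using graph_on_edge(1)[OF assms(1,2)] by (metis empty_subsetI insert_subset)
    moreover have "card e' = 2" "card e = 2" using assms by (auto simp: graph_on_def)
    ultimately have "e = e'" by (metis card.infinite card_subset_eq zero_neq_numeral)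
    with False show False by simp
  qed
  then show ?thesis using False by (auto simp: C_G_def)
qed

lemma P_G_eq_prod_linear_forms:
  assumes g: "graph_on n E"
  shows "P_G E = (\<Prod>e\<in>E. linear_form E (C_G E e))"
  unfolding P_G_def
proof (rule prod.cong[OF refl])
  fix e assume e: "e \<in> E"
  have inc: "(\<Sum>e'\<in>inc_edges E i. Var e') = linear_form E (\<lambda>e'. if i \<in> e' then 1 else (0::int))" for i
    using graph_on_finite[OF g]
    by (simp add: inc_edges_def Var_def linear_form_def sum.inter_filter[symmetric] if_distrib
        cong: if_cong)
  show "(\<Sum>e'\<in>inc_edges E (lo e). Var e') - (\<Sum>e'\<in>inc_edges E (hi e). Var e') = linear_form E (C_G E e)"
    unfolding inc linear_form_def sum_subtractf[symmetric] single_diff[symmetric]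
    by (rule sum.cong[OF refl]) (simp add: C_G_eq[OF g e])
qed

lemma col_slots_eq_Sigma: "col_slots E K = (SIGMA e:E. {..<Poly_Mapping.lookup K e})"
  by (auto simp: col_slots_def)

lemma image_count_col_slots:
  assumes "finite E" "K \<in> NE E"
  shows "image_count (col_slots E K) fst = K"
proof (rule poly_mapping_eqI)
  fix e
  have "{s\<in>col_slots E K. fst s = e} = (if e \<in> E then {e} \<times> {..<Poly_Mapping.lookup K e} else {})"
    by (auto simp: col_slots_def)
  moreover have "e \<notin> E \<Longrightarrow> Poly_Mapping.lookup K e = 0"
    using assms(2) by (auto simp: NE_def in_keys_iff)
  ultimately show "Poly_Mapping.lookup (image_count (col_slots E K) fst) e = Poly_Mapping.lookup K e"
    using assms(1) by (simp add: lookup_image_count col_slots_eq_Sigma card_cartesian_product)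
qed

lemma H_E_eq_prod_linear_forms:
  assumes g: "graph_on n E"
  shows "H_E E K = (\<Prod>s\<in>col_slots E K. linear_form {1..n} (\<lambda>v. if v \<in> fst s then 1 else 0))"
proof -
  have edge: "linear_form {1..n} (\<lambda>v. if v \<in> e then 1 else (0::complex)) = Var (lo e) + Var (hi e)"
    if e: "e \<in> E" for e
  proof -
    have "e \<subseteq> {1..n}" using g e by (auto simp: graph_on_def)
    then have "{v\<in>{1..n}. v \<in> e} = {lo e, hi e}"
      using graph_on_edge(1)[OF g e] by blast
    then have "linear_form {1..n} (\<lambda>v. if v \<in> e then 1 else (0::complex))
        = (\<Sum>v\<in>{lo e, hi e}. Poly_Mapping.single (Poly_Mapping.single v 1) (1::complex))"
      by (simp add: linear_form_def if_distrib sum.inter_filter[symmetric] cong: if_cong)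
    then show ?thesis using graph_on_edge(2)[OF g e] by (simp add: Var_def)
  qed
  have "H_E E K = (\<Prod>e\<in>E. \<Prod>k\<in>{..<Poly_Mapping.lookup K e}. linear_form {1..n} (\<lambda>v. if v \<in> e then 1 else 0))"
    unfolding H_E_def by (rule prod.cong[OF refl]) (simp only: edge, simp)
  also have "\<dots> = (\<Prod>s\<in>col_slots E K. linear_form {1..n} (\<lambda>v. if v \<in> fst s then 1 else 0))"
    unfolding col_slots_eq_Sigma using graph_on_finite[OF g]
    by (subst prod.Sigma) (auto simp: case_prod_beta)
  finally show ?thesis .
qed

definition edge_sign :: "nat set \<Rightarrow> nat \<Rightarrow> 'a::ring_1" where
  "edge_sign e v = (if v = lo e then 1 else 0) - (if v = hi e then 1 else 0)"

lemma Q_E_eq_prod_linear_forms: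
  assumes g: "graph_on n E"
  shows "Q_E E = (\<Prod>e\<in>E. linear_form {1..n} (edge_sign e))"
  unfolding Q_E_def
proof (rule prod.cong[OF refl])
  fix e assume e: "e \<in> E"
  have "linear_form {1..n} (edge_sign e :: nat \<Rightarrow> complex)
      = linear_form {1..n} (\<lambda>v. if v = lo e then 1 else 0) - linear_form {1..n} (\<lambda>v. if v = hi e then 1 else 0)"
    unfolding linear_form_def sum_subtractf[symmetric]
    by (rule sum.cong[OF refl]) (simp add: edge_sign_def single_diff)
  also have "\<dots> = Var (lo e) - Var (hi e)"
    using graph_on_edge(5,6)[OF g e] by (simp only: linear_form_delta finite_atLeastAtMost Var_def)
  finally show "Var (lo e) - Var (hi e) = linear_form {1..n} (edge_sign e :: nat \<Rightarrow> complex)"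
    by (rule sym)
qed

lemma fact_pm_coeff_P_G:
  assumes g: "graph_on n E" and K: "K \<in> NE E"
  shows "int (fact_pm K) * coe K (P_G E) = per_C_G E K"
proof -
  have fE: "finite E" using graph_on_finite[OF g] .
  let ?S = "col_slots E K"
  have fS: "finite ?S" using fE by (simp add: col_slots_eq_Sigma)
  have fst_slot: "s \<in> ?S \<Longrightarrow> fst s \<in> E" for s by (auto simp: col_slots_def)
  have "Poly_Mapping.single K 1 = (\<Prod>s\<in>?S. linear_form E (\<lambda>v. if v = fst s then 1 else (0::int)))"
    by (subst monomial_eq_prod_linear_forms[OF fS fE]) (auto simp: fst_slot image_count_col_slots[OF fE K])
  then have "int (fact_pm K) * coe K (P_G E)
      = apolar (\<Prod>s\<in>?S. linear_form E (\<lambda>v. if v = fst s then 1 else 0)) (P_G E)"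
    unfolding coe_def by (metis apolar_single_one)
  also have "\<dots> = (\<Sum>\<sigma>\<in>{\<sigma>\<in>E \<rightarrow>\<^sub>E ?S. bij_betw \<sigma> E ?S}.
                     \<Prod>e\<in>E. \<Sum>v\<in>E. (if v = fst (\<sigma> e) then 1 else 0) * C_G E e v)"
    unfolding P_G_eq_prod_linear_forms[OF g] by (rule apolar_prod_linear_forms[OF fS fE fE])
  also have "\<dots> = per_C_G E K"
    unfolding per_C_G_def permanent_def C_G_K_def
  proof (intro sum.cong refl prod.cong)
    fix \<sigma> e assume "\<sigma> \<in> {\<sigma>\<in>E \<rightarrow>\<^sub>E ?S. bij_betw \<sigma> E ?S}" "e \<in> E"
    then have "fst (\<sigma> e) \<in> E" using fst_slot by blast
    then show "(\<Sum>v\<in>E. (if v = fst (\<sigma> e) then 1 else 0) * C_G E e v) = C_G E e (fst (\<sigma> e))"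
      using fE by (rule sum_delta_mult[rotated])
  qed
  finally show ?thesis .
qed

lemma Q_E_expand:
  assumes "graph_on n E"
  shows "Q_E E = (\<Sum>h\<in>E \<rightarrow>\<^sub>E {1..n}. Poly_Mapping.single (image_count E h) (\<Prod>e\<in>E. edge_sign e (h e)))"
  unfolding Q_E_eq_prod_linear_forms[OF assms]
  using graph_on_finite[OF assms] by (simp add: prod_linear_form_expand)

lemma degree_keys_Q_E:
  assumes "graph_on n E" "M \<in> Poly_Mapping.keys (Q_E E)"
  shows "sum (Poly_Mapping.lookup M) (Poly_Mapping.keys M) = card E"
proof -
  have "Poly_Mapping.keys (Q_E E) \<subseteq> image_count E ` (E \<rightarrow>\<^sub>E {1..n})"
    unfolding Q_E_expand[OF assms(1)]
    by (rule keys_sum_single) (simp add: finite_PiE graph_on_finite[OF assms(1)])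
  then have "M \<in> image_count E ` (E \<rightarrow>\<^sub>E {1..n})" using assms(2) by blast
  then show ?thesis using degree_image_count[OF graph_on_finite[OF assms(1)]] by auto
qed

lemma cnj_lookup_Q_E:
  assumes "graph_on n E"
  shows "cnj (Poly_Mapping.lookup (Q_E E) M) = Poly_Mapping.lookup (Q_E E) M"
proof -
  have "cnj (edge_sign e v :: complex) = edge_sign e v" for e v by (simp add: edge_sign_def)
  then show ?thesis
    using graph_on_finite[OF assms]
    by (simp add: Q_E_expand[OF assms] lookup_sum_single finite_PiE cnj_sum cnj_prod)
qed

lemma inner_m_eq_apolar:
  assumes "\<And>M. M \<in> Poly_Mapping.keys g \<Longrightarrow> sum (Poly_Mapping.lookup M) (Poly_Mapping.keys M) = m"
    and "\<And>M. cnj (Poly_Mapping.lookup g M) = Poly_Mapping.lookup g M"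
  shows "inner_m m f g = apolar f g"
  unfolding inner_m_def apolar_def coe_def using assms by (intro sum.cong) auto

lemma inner_m_H_E_Q_E:
  assumes g: "graph_on n E"
  shows "inner_m (card E) (H_E E K) (Q_E E) = of_int (per_C_G E K)"
proof -
  have fE: "finite E" using graph_on_finite[OF g] .
  let ?S = "col_slots E K"
  have fS: "finite ?S" using fE by (simp add: col_slots_eq_Sigma)
  have "inner_m (card E) (H_E E K) (Q_E E) = apolar (H_E E K) (Q_E E)"
    using degree_keys_Q_E[OF g] cnj_lookup_Q_E[OF g] by (rule inner_m_eq_apolar)
  also have "\<dots> = (\<Sum>\<sigma>\<in>{\<sigma>\<in>E \<rightarrow>\<^sub>E ?S. bij_betw \<sigma> E ?S}.
                     \<Prod>e\<in>E. \<Sum>v\<in>{1..n}. (if v \<in> fst (\<sigma> e) then 1 else 0) * edge_sign e v)"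
    unfolding H_E_eq_prod_linear_forms[OF g] Q_E_eq_prod_linear_forms[OF g]
    by (rule apolar_prod_linear_forms[OF fS fE finite_atLeastAtMost])
  also have "\<dots> = of_int (per_C_G E K)"
    unfolding per_C_G_def permanent_def C_G_K_def of_int_sum of_int_prod
  proof (intro sum.cong refl prod.cong)
    fix \<sigma> e assume "\<sigma> \<in> {\<sigma>\<in>E \<rightarrow>\<^sub>E ?S. bij_betw \<sigma> E ?S}" "e \<in> E"
    moreover have "s \<in> ?S \<Longrightarrow> fst s \<in> E" for s by (auto simp: col_slots_def)
    ultimately have "fst (\<sigma> e) \<in> E" by blast
    have ends: "lo e \<in> {1..n}" "hi e \<in> {1..n}" using graph_on_edge(5,6)[OF g \<open>e \<in> E\<close>] .
    have "(\<Sum>v\<in>{1..n}. (if v \<in> fst (\<sigma> e) then 1 else 0) * (edge_sign e v :: complex))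
        = (\<Sum>v\<in>{1..n}. (if v = lo e then 1 else 0) * (if v \<in> fst (\<sigma> e) then 1 else (0::complex)))
        - (\<Sum>v\<in>{1..n}. (if v = hi e then 1 else 0) * (if v \<in> fst (\<sigma> e) then 1 else 0))"
      unfolding sum_subtractf[symmetric] by (rule sum.cong[OF refl]) (simp add: edge_sign_def)
    also have "\<dots> = of_int (C_G E e (fst (\<sigma> e)))"
      using ends by (simp add: sum_delta_mult C_G_eq[OF g \<open>e \<in> E\<close> \<open>fst (\<sigma> e) \<in> E\<close>])
    finally show "(\<Sum>v\<in>{1..n}. (if v \<in> fst (\<sigma> e) then 1 else 0) * (edge_sign e v :: complex))
        = of_int (C_G E e (fst (\<sigma> e)))" .
  qed
  finally show ?thesis .
qed

lemma lookup_const_mp_mult: "Poly_Mapping.lookup (const_mp c * f) M = c * Poly_Mapping.lookup f M"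
  unfolding const_mp_def mult_map_scale_conv_mult[symmetric]
  by (simp add: map.rep_eq when_def)

lemma inner_m_sum_const_mp_mult:
  "inner_m m (\<Sum>K\<in>T. const_mp (c K) * H K) g = (\<Sum>K\<in>T. c K * inner_m m (H K) g)"
proof -
  have inner_m_keys: "inner_m m f g = (\<Sum>M\<in>{M\<in>Poly_Mapping.keys g. sum (Poly_Mapping.lookup M) (Poly_Mapping.keys M) = m}.
      of_nat (fact_pm M) * Poly_Mapping.lookup f M * cnj (Poly_Mapping.lookup g M))" for f
    unfolding inner_m_def coe_def by (intro sum.mono_neutral_left) (auto simp: in_keys_iff)
  show ?thesis
    unfolding inner_m_keys
    by (simp add: lookup_sum lookup_const_mp_mult sum_distrib_left sum_distrib_right
        mult.assoc mult.left_commute sum.swap[of _ T])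
qed

lemma finite_NE_m:
  assumes "finite E"
  shows "finite (NE_m E m)"
proof -
  have "inj_on (\<lambda>K. restrict (Poly_Mapping.lookup K) E) (NE_m E m)"
  proof (rule inj_onI)
    fix K1 K2 assume K: "K1 \<in> NE_m E m" "K2 \<in> NE_m E m"
      and eq: "restrict (Poly_Mapping.lookup K1) E = restrict (Poly_Mapping.lookup K2) E"
    show "K1 = K2"
    proof (rule poly_mapping_eqI)
      fix e
      show "Poly_Mapping.lookup K1 e = Poly_Mapping.lookup K2 e"
        using fun_cong[OF eq, of e] K
        by (cases "e \<in> E") (auto simp: NE_m_def NE_def, metis in_keys_iff subsetD)
    qed
  qed
  moreover have "(\<lambda>K. restrict (Poly_Mapping.lookup K) E) ` NE_m E m \<subseteq> E \<rightarrow>\<^sub>E {..m}"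
  proof clarify
    fix K assume K: "K \<in> NE_m E m"
    have "Poly_Mapping.lookup K e \<le> m" if "e \<in> E" for e
      using member_le_sum[of e E "Poly_Mapping.lookup K"] assms that K by (simp add: NE_m_def)
    then show "restrict (Poly_Mapping.lookup K) E \<in> E \<rightarrow>\<^sub>E {..m}" by auto
  qed
  ultimately show ?thesis
    using assms by (metis finite_PiE finite_atMost finite_imageD finite_subset)
qed

lemma H_E_mem_W_E:
  assumes "finite E" "K' \<in> NE_m E m" "le_pw K' K"
  shows "H_E E K' \<in> W_E E K m"
proof -
  let ?T = "{K''\<in>NE_m E m. le_pw K'' K}"
  have "(\<Sum>K''\<in>?T. const_mp (if K'' = K' then 1 else 0) * H_E E K'')
      = (\<Sum>K''\<in>?T. if K'' = K' then H_E E K'' else 0)"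
    by (rule sum.cong) (auto simp: const_mp_def)
  also have "\<dots> = H_E E K'"
    using assms finite_NE_m[OF assms(1), of m] by (simp add: sum.delta')
  finally have "(\<Sum>K''\<in>?T. const_mp (if K'' = K' then 1 else 0) * H_E E K'') = H_E E K'" .
  then show ?thesis
    unfolding W_E_def by (intro CollectI exI[of _ "\<lambda>K''. if K'' = K' then 1 else 0"]) simp
qed

lemma ex_W_E_inner_m_nonzero_iff:
  assumes "finite E"
  shows "(\<exists>F\<in>W_E E K m. inner_m d F g \<noteq> 0)
     \<longleftrightarrow> (\<exists>K'\<in>NE_m E m. le_pw K' K \<and> inner_m d (H_E E K') g \<noteq> 0)"
proof
  assume "\<exists>F\<in>W_E E K m. inner_m d F g \<noteq> 0"
  then obtain c where "(\<Sum>K'\<in>{K'\<in>NE_m E m. le_pw K' K}. c K' * inner_m d (H_E E K') g) \<noteq> 0"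
    unfolding W_E_def by (auto simp: inner_m_sum_const_mp_mult)
  then show "\<exists>K'\<in>NE_m E m. le_pw K' K \<and> inner_m d (H_E E K') g \<noteq> 0"
    by (metis (no_types, lifting) mem_Collect_eq mult_zero_right sum.neutral)
qed (use H_E_mem_W_E[OF assms] in blast)

theorem lemma2p1:
  fixes n :: nat and E :: "nat set set" and K :: "nat set \<Rightarrow>\<^sub>0 nat"
  assumes "graph_on n E" and "nice E" and "K \<in> NE E"
  shows "(sufficient E K
          \<longleftrightarrow> (\<exists>K'\<in>NE_m E (card E). le_pw K' K \<and> inner_m (card E) (H_E E K') (Q_E E) \<noteq> 0))
       \<and> (sufficient E K
          \<longleftrightarrow> (\<exists>F\<in>W_E E K (card E). inner_m (card E) F (Q_E E) \<noteq> 0))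
       \<and> (sufficient E K
          \<longleftrightarrow> (\<exists>K'\<in>NE_m E (card E). le_pw K' K \<and> per_C_G E K' \<noteq> 0))"
proof -
  note g = assms(1)
  have coeff_iff_per: "coe K' (P_G E) \<noteq> 0 \<longleftrightarrow> per_C_G E K' \<noteq> 0" if "K' \<in> NE_m E (card E)" for K'
    using that fact_pm_coeff_P_G[OF g, of K'] fact_pm_pos[of K'] by (auto simp: NE_m_def)
  have inner_iff_per: "inner_m (card E) (H_E E K') (Q_E E) \<noteq> 0 \<longleftrightarrow> per_C_G E K' \<noteq> 0" for K'
    by (simp add: inner_m_H_E_Q_E[OF g])
  have "sufficient E K \<longleftrightarrow> (\<exists>K'\<in>NE_m E (card E). le_pw K' K \<and> per_C_G E K' \<noteq> 0)"
    unfolding sufficient_def mon_def using coeff_iff_per by auto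
  then show ?thesis
    using ex_W_E_inner_m_nonzero_iff[OF graph_on_finite[OF g]] inner_iff_per by auto
qed

end
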